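(* Let $(N_0,c,w,P)$ be an RS-situation with corresponding RS-game $(N_0,v)$. Then there exist prices $w_i^*\ge c$, $i\in N$, such that for all nonempty coalitions $S\subseteq N$ of retailers \[\sum_{i\in S}\Pi_i^{ret}(q_i^c;w_i^* )\ \ge\ \sum_{i\in S}\Pi_i^{ret}(q_i^S;w(q_S^S))=v(S),\] or equivalently $\sum_{i\in S}q_i^c w_i^*\le\sum_{i\in S}p_i(q_i^c)q_i^c-v(S)$.
   Context: Let $c\in\mathbb{R}$. An RS-problem is a triple $(c,w,p)$ where $w:\mathbb{R}_+\to(c,+\infty)$ is decreasing (non-increasing) and continuous, and $p:\mathbb{R}_+\to\mathbb{R}$ is decreasing (non-increasing) and continuous, satisfies $p(0)>w(0)$, and there exists $q>0$ with $p(q)=c$. An RS-situation is a tuple $(N_0,c,w,P)$ where $N=\{1,\dots,n\}$ is the set of retailers, $0$ denotes the supplier, $N_0=N\cup\{0\}$, $P=(p_1,\dots,p_n)$, and $(c,w,p_i)$ is an RS-problem for each $i\in N$. For $S\subseteq N$ write $S_0=S\cup\{0\}$. For $q\ge0$ and $\omega\in\mathbb{R}$, $\Pi_i^{ret}(q;\omega)=(p_i(q)-\omega)q$. For nonempty $S\subseteq N$, $(q_i^S)_{i\in S}$ is a fixed optimal solution of: maximize $\sum_{i\in S}(p_i(q_i)-w(q_S))q_i$ over $q\in\mathbb{R}_+^{S}$ subject to $p_i(q_i)\ge w(q_S)$ for all $i\in S$, where $q_S=\sum_{i\in S}q_i$; $q_S^S=\sum_{i\in S}q_i^S$. For $i\in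 N$, $q_i^c$ is a fixed optimal solution of: maximize $(p_i(q)-c)q$ over $q\ge0$ subject to $p_i(q)\ge c$. The corresponding RS-game $(N_0,v)$ is the TU game on $N_0$ with $v(\emptyset)=0$ and, for all $S\subseteq N$, $v(S)=\sum_{i\in S}\Pi_i^{ret}(q_i^S;w(q_S^S))$ and $v(S_0)=\sum_{i\in S}\Pi_i^{ret}(q_i^c;c)$. *)

theory Defs
  imports "HOL-Analysis.Analysis"
begin

definition nonincr_Rp :: "(real \<Rightarrow> real) \<Rightarrow> bool" where
  "nonincr_Rp f \<longleftrightarrow> (\<forall>x y. 0 \<le> x \<longrightarrow> x \<le> y \<longrightarrow> f y \<le> f x)"

definition RS_problem :: "real \<Rightarrow> (real \<Rightarrow> real) \<Rightarrow> (real \<Rightarrow> real) \<Rightarrow> bool" where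
  "RS_problem c w p \<longleftrightarrow>
     (\<forall>x\<ge>0. w x > c) \<and> nonincr_Rp w \<and> continuous_on {0..} w \<and>
     nonincr_Rp p \<and> continuous_on {0..} p \<and> p 0 > w 0 \<and> (\<exists>q>0. p q = c)"

definition RS_situation :: "nat \<Rightarrow> real \<Rightarrow> (real \<Rightarrow> real) \<Rightarrow> (nat \<Rightarrow> real \<Rightarrow> real) \<Rightarrow> bool" where
  "RS_situation n c w P \<longleftrightarrow> (\<forall>i\<in>{1..n}. RS_problem c w (P i))"

definition Pi_ret :: "(real \<Rightarrow> real) \<Rightarrow> real \<Rightarrow> real \<Rightarrow> real" where
  "Pi_ret p q \<omega> = (p q - \<omega>) * q"

definition coal_feasible :: "(real \<Rightarrow> real) \<Rightarrow> (nat \<Rightarrow> real \<Rightarrow> real) \<Rightarrow> nat set \<Rightarrow> (nat \<Rightarrow> real) \<Rightarrow> bool" where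
  "coal_feasible w P S x \<longleftrightarrow> (\<forall>i\<in>S. 0 \<le> x i \<and> P i (x i) \<ge> w (\<Sum>j\<in>S. x j))"

definition coal_obj :: "(real \<Rightarrow> real) \<Rightarrow> (nat \<Rightarrow> real \<Rightarrow> real) \<Rightarrow> nat set \<Rightarrow> (nat \<Rightarrow> real) \<Rightarrow> real" where
  "coal_obj w P S x = (\<Sum>i\<in>S. (P i (x i) - w (\<Sum>j\<in>S. x j)) * x i)"

definition coal_optimal :: "(real \<Rightarrow> real) \<Rightarrow> (nat \<Rightarrow> real \<Rightarrow> real) \<Rightarrow> nat set \<Rightarrow> (nat \<Rightarrow> real) \<Rightarrow> bool" where
  "coal_optimal w P S x \<longleftrightarrow> coal_feasible w P S x \<and>
     (\<forall>y. coal_feasible w P S y \<longrightarrow> coal_obj w P S y \<le> coal_obj w P S x)"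

definition c_optimal :: "real \<Rightarrow> (real \<Rightarrow> real) \<Rightarrow> real \<Rightarrow> bool" where
  "c_optimal c p q \<longleftrightarrow> 0 \<le> q \<and> p q \<ge> c \<and>
     (\<forall>y\<ge>0. p y \<ge> c \<longrightarrow> (p y - c) * y \<le> (p q - c) * q)"

text \<open>The RS-game on N_0 = {0..n} (0 = supplier), given the fixed optimal solutions
  qS S (for coalitions S of retailers) and qc i.\<close>
definition RS_game :: "nat \<Rightarrow> real \<Rightarrow> (real \<Rightarrow> real) \<Rightarrow> (nat \<Rightarrow> real \<Rightarrow> real)
    \<Rightarrow> (nat set \<Rightarrow> nat \<Rightarrow> real) \<Rightarrow> (nat \<Rightarrow> real) \<Rightarrow> nat set \<Rightarrow> real" where
  "RS_game n c w P qS qc T =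
     (if 0 \<in> T then (\<Sum>i\<in>T - {0}. Pi_ret (P i) (qc i) c)
      else (\<Sum>i\<in>T. Pi_ret (P i) (qS T i) (w (\<Sum>j\<in>T. qS T j))))"

end

theory Submission
  imports Defs
begin

(* Charging every retailer the marginal cost c works. A coalition S buys at the wholesale price
   w(q_S^S) > c, and each of its quantities q_i^S satisfies p_i(q_i^S) >= w(q_S^S) >= c, so it is
   feasible for retailer i's stand-alone problem at price c; optimality of q_i^c there bounds
   retailer i's share of v(S) by Pi_i(q_i^c; c). *)

lemma Pi_ret_le_c_optimal:
  assumes "c_optimal c p q" and "0 \<le> x" and "c \<le> \<omega>" and "\<omega> \<le> p x"
  shows "Pi_ret p x \<omega> \<le> Pi_ret p q c"
proof -
  have "Pi_ret p x \<omega> \<le> (p x - c) * x"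
    unfolding Pi_ret_def using assms(2,3) by (intro mult_right_mono) auto
  also have "\<dots> \<le> (p q - c) * q"
    using assms unfolding c_optimal_def by auto
  finally show ?thesis
    by (simp add: Pi_ret_def)
qed

lemma coal_feasible_sum_nonneg:
  assumes "coal_feasible w P S x"
  shows "0 \<le> (\<Sum>j\<in>S. x j)"
  using assms by (auto simp: coal_feasible_def intro: sum_nonneg)

lemma coalition_profit_le_stand_alone:
  assumes "RS_situation n c w P" and "S \<subseteq> {1..n}"
    and "coal_feasible w P S x"
    and "\<And>i. i \<in> {1..n} \<Longrightarrow> c_optimal c (P i) (qc i)"
  shows "(\<Sum>i\<in>S. Pi_ret (P i) (x i) (w (\<Sum>j\<in>S. x j))) \<le> (\<Sum>i\<in>S. Pi_ret (P i) (qc i) c)"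
proof (rule sum_mono)
  fix i assume "i \<in> S"
  with assms(2) have i: "i \<in> {1..n}" by auto
  have "c < w (\<Sum>j\<in>S. x j)"
    using assms(1) i coal_feasible_sum_nonneg[OF assms(3)]
    by (simp add: RS_situation_def RS_problem_def)
  with \<open>i \<in> S\<close> assms(3) show "Pi_ret (P i) (x i) (w (\<Sum>j\<in>S. x j)) \<le> Pi_ret (P i) (qc i) c"
    by (intro Pi_ret_le_c_optimal assms(4)[OF i]) (auto simp: coal_feasible_def)
qed

lemma RS_game_retailers:
  assumes "0 \<notin> S"
  shows "RS_game n c w P qS qc S = (\<Sum>i\<in>S. Pi_ret (P i) (qS S i) (w (\<Sum>j\<in>S. qS S j)))"
  using assms by (simp add: RS_game_def)

theorem corollary5p5:
  fixes n :: nat and c :: real and w :: "real \<Rightarrow> real" and P :: "nat \<Rightarrow> real \<Rightarrow> real"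
    and qS :: "nat set \<Rightarrow> nat \<Rightarrow> real" and qc :: "nat \<Rightarrow> real"
  assumes "RS_situation n c w P"
    and "\<And>S. S \<subseteq> {1..n} \<Longrightarrow> S \<noteq> {} \<Longrightarrow> coal_optimal w P S (qS S)"
    and "\<And>i. i \<in> {1..n} \<Longrightarrow> c_optimal c (P i) (qc i)"
  shows "\<exists>ws :: nat \<Rightarrow> real. (\<forall>i\<in>{1..n}. ws i \<ge> c) \<and>
           (\<forall>S. S \<subseteq> {1..n} \<longrightarrow> S \<noteq> {} \<longrightarrow>
              (\<Sum>i\<in>S. Pi_ret (P i) (qc i) (ws i)) \<ge> (\<Sum>i\<in>S. Pi_ret (P i) (qS S i) (w (\<Sum>j\<in>S. qS S j))) \<and>
              (\<Sum>i\<in>S. Pi_ret (P i) (qS S i) (w (\<Sum>j\<in>S. qS S j))) = RS_game n c w P qS qc S)"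
proof (intro exI[of _ "\<lambda>_. c"] conjI ballI allI impI order.refl)
  fix S assume S: "S \<subseteq> {1..n}" "S \<noteq> {}"
  then have "coal_feasible w P S (qS S)"
    using assms(2) by (simp add: coal_optimal_def)
  then show "(\<Sum>i\<in>S. Pi_ret (P i) (qS S i) (w (\<Sum>j\<in>S. qS S j))) \<le> (\<Sum>i\<in>S. Pi_ret (P i) (qc i) c)"
    using coalition_profit_le_stand_alone assms(1,3) S(1) by blast
  from S(1) have "0 \<notin> S" by auto
  then show "(\<Sum>i\<in>S. Pi_ret (P i) (qS S i) (w (\<Sum>j\<in>S. qS S j))) = RS_game n c w P qS qc S"
    by (rule RS_game_retailers[symmetric])
qed

end
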